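(* For any budget $\Lambda\ge1$, the total cost of all evaluations performed by the Kometo algorithm (described in the context) does not exceed $\Lambda$.
   Context: Setting: $\mathcal{X}$ is a set with a hierarchical partitioning $\mathcal{P}=(\mathcal{P}_{h,i})_{h\ge0,0\le i\le K^h-1}$, $K\ge2$: $\mathcal{P}_{0,0}=\mathcal{X}$ and the $K$ children $\mathcal{P}_{h+1,Ki+l}$ ($0\le l\le K-1$) of $\mathcal{P}_{h,i}$ partition it. Each cell has a fixed representative $x_{h,i}\in\mathcal{P}_{h,i}$. Fidelities $Z=[0,1]$, functions $f_z:\mathcal{X}\to\mathbb{R}$, a known cost function $\lambda:Z\to[0,+\infty]$, and for each $c\ge1$ an available fidelity $z_c$ with $\lambda(z_c)\le c$; evaluating $f_z(x)$ costs $\lambda(z)$. $\log$ is the natural logarithm. Kometo (input $\mathcal{P}$, $\Lambda$, $\lambda$, oracle access to the $f_z$): set $\tilde\Lambda=\left\lfloor\frac{(e-1)\Lambda}{2Ke(\log\Lambda+1)^2}\right\rfloor$ and $j_{\max}=\lfloor\log\tilde\Lambda\rfloor$. "Fidelity level $j$" (integer $j\ge0$) means fidelity $z_{e^j}$. For each cell $(h,i)$ and level $j$ the algorithm keeps a flag $T_{h,i,j}\in\{0,1\}$ (initially $0$) and, when $T_{h,i,j}=1$, the value $f_{h,i,j}=f_{z_{e^j}}(x_{h,i})$. Opening a cell $\mathcal{P}_{h,i}$ at fidelity level $j$ means: for each child $\mathcal{P}_{h+1,i'}$ and each $0\le u\le j$, set $T_{h+1,i',u}=1$, so that $f_{h+1,i',u}=f_{z_{e^u}}(x_{h+1,i'})$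 is evaluated (each (cell, level) value is evaluated at most once). Steps: (1) open the root $\mathcal{P}_{0,0}$ with budget $\tilde\Lambda$ (i.e. at fidelity level $j_{\max}$); (2) exploration: for $h=1,\dots,\lfloor\tilde\Lambda\rfloor$, for $m=1,\dots,\lfloor\tilde\Lambda/h\rfloor$: let $j=\lfloor\log\frac{\tilde\Lambda}{hm}\rfloor$ and open at fidelity level $j$ the not-yet-opened depth-$h$ cell $\mathcal{P}_{h,i}$ with $T_{h,i,j}=1$ having the highest value $f_{h,i,j}$; (3) cross-validation: for $j=0,\dots,j_{\max}$, let $x^c_j$ be the representative $x_{h,i}$ of a cell maximizing $f_{h,i,j}$ over all $(h,i)$ with $T_{h,i,j}=1$, and evaluate $f_{z_{\tilde\Lambda}}(x^c_j)$ (cost at most $\tilde\Lambda$); (4) output $x_\Lambda=\arg\max_{j\in\{0,\dots,j_{\max}\}}f_{z_{\tilde\Lambda}}(x^c_j)$. *)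

theory Defs
  imports Complex_Main "HOL-Library.Extended_Nonnegative_Real"
begin

text \<open>Cells are pairs (h,i) with i < K^h,
  the children of (h,i) are (h+1, K*i+l) for l < K.  A state of the algorithm is a pair
  (T, Opd): T is the set of triples (h,i,u) with flag T_{h,i,u} = 1 (i.e. the value
  f_{z_{e^u}}(x_{h,i}) has been evaluated), Opd is the set of cells opened so far.
  Fidelity levels are integers so that "level -1" (no level at all) is expressible.\<close>

type_synonym kstate = "(nat \<times> nat \<times> nat) set \<times> (nat \<times> nat) set"

definition kometo_Lt :: "nat \<Rightarrow> real \<Rightarrow> nat" where
  "kometo_Lt K Lam = nat \<lfloor>(exp 1 - 1) * Lam / (2 * real K * exp 1 * (ln Lam + 1)^2)\<rfloor>"

text \<open>j_max = floor(log Lt); when Lt = 0 there is no fidelity level (encoded as -1).\<close>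
definition kometo_jmax :: "nat \<Rightarrow> int" where
  "kometo_jmax L = (if L \<ge> 1 then \<lfloor>ln (real L)\<rfloor> else -1)"

definition open_cell :: "nat \<Rightarrow> (nat \<times> nat \<times> nat) set \<Rightarrow> nat \<Rightarrow> nat \<Rightarrow> int
    \<Rightarrow> (nat \<times> nat \<times> nat) set" where
  "open_cell K T h i j = T \<union> {(h + 1, K * i + l, u) | l u. l < K \<and> int u \<le> j}"

definition kometo_schedule :: "nat \<Rightarrow> (nat \<times> nat) list" where
  "kometo_schedule L =
     concat (map (\<lambda>h. map (\<lambda>m. (h, nat \<lfloor>ln (real L / real (h * m))\<rfloor>)) [1..<L div h + 1])
                 [1..<L + 1])"

text \<open>Executions of the exploration phase (any tie-breaking of the argmax is allowed;
  if there is no candidate cell, the step does nothing).\<close>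
inductive kometo_explore ::
  "nat \<Rightarrow> (real \<Rightarrow> 'a \<Rightarrow> real) \<Rightarrow> (real \<Rightarrow> real) \<Rightarrow> (nat \<Rightarrow> nat \<Rightarrow> 'a)
     \<Rightarrow> kstate \<Rightarrow> (nat \<times> nat) list \<Rightarrow> kstate \<Rightarrow> bool"
  for K f z x where
  k_done: "kometo_explore K f z x s [] s"
| k_skip: "\<lbrakk>\<not> (\<exists>i. (h, i) \<notin> Opd \<and> (h, i, j) \<in> T);
          kometo_explore K f z x (T, Opd) rest s'\<rbrakk>
         \<Longrightarrow> kometo_explore K f z x (T, Opd) ((h, j) # rest) s'"
| k_open: "\<lbrakk>(h, i) \<notin> Opd; (h, i, j) \<in> T;
         \<forall>i'. (h, i') \<notin> Opd \<and> (h, i', j) \<in> T \<longrightarrow> f (z (exp (real j))) (x h i') \<le> f (z (exp (real j))) (x h i);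
         kometo_explore K f z x (open_cell K T h i (int j), insert (h, i) Opd) rest s'\<rbrakk>
        \<Longrightarrow> kometo_explore K f z x (T, Opd) ((h, j) # rest) s'"

text \<open>Total cost: every evaluated (cell, level) value f_{z_{e^u}}(x_{h,i}) costs lam(z_{e^u})
  (each evaluated once), plus one evaluation at fidelity z_{Lt} for each cross-validation
  level j = 0..j_max.\<close>
definition kometo_cost :: "(real \<Rightarrow> ennreal) \<Rightarrow> (real \<Rightarrow> real) \<Rightarrow> nat
    \<Rightarrow> (nat \<times> nat \<times> nat) set \<Rightarrow> ennreal" where
  "kometo_cost lam z L T =
     (\<Sum>(h, i, u) \<in> T. lam (z (exp (real u)))) + of_nat (nat (kometo_jmax L + 1)) * lam (z (real L))"

end

theory Submission
  imports Defs "HOL-Analysis.Harmonic_Numbers"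
begin

text \<open>Bound the cost of the evaluation at level u by e^u.  Opening a cell at level j evaluates
  K children at the levels 0..j, which costs at most K e/(e-1) e^j.  The exploration step (h, m)
  uses a level j with e^j \<le> Lt/(h m), so summing the two harmonic series over m and h bounds the
  exploration by K e/(e-1) Lt (log Lt + 1)^2; the root costs K e/(e-1) Lt more and
  cross-validation (log Lt + 1) Lt.  The factor 2 K e (log Lam + 1)^2/(e-1) in the definition
  of Lt absorbs all three terms, since log Lt \<le> log Lam and Lt \<ge> 1 forces log Lam \<ge> 1.\<close>

lemma sum_exp_atMost_le:
  "(\<Sum>u\<le>j. exp (real u)) \<le> exp 1 / (exp 1 - 1) * exp (real j)"
proof -
  have "(\<Sum>u\<le>j. exp (real u)) = (\<Sum>u\<le>j. exp 1 ^ u)"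
    using exp_of_nat_mult[of _ "1::real"] by simp
  also have "\<dots> = (exp 1 ^ Suc j - 1) / (exp 1 - 1)"
    by (simp add: sum_gp0 field_simps)
  also have "\<dots> \<le> exp 1 ^ Suc j / (exp 1 - 1)"
    by (simp add: divide_right_mono)
  also have "\<dots> = exp 1 / (exp 1 - 1) * exp (real j)"
    using exp_of_nat_mult[of j "1::real"] by simp
  finally show ?thesis .
qed

lemma sum_exp_atMost_floor_ln_le:
  assumes "y \<ge> 1"
  shows "(\<Sum>u\<le>nat \<lfloor>ln y\<rfloor>. exp (real u)) \<le> exp 1 / (exp 1 - 1) * y"
proof -
  have "real (nat \<lfloor>ln y\<rfloor>) \<le> ln y"
    using assms by simp
  then have "exp (real (nat \<lfloor>ln y\<rfloor>)) \<le> y"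
    using assms by (metis exp_le_cancel_iff exp_ln less_le_trans zero_less_one)
  moreover have "exp 1 / (exp 1 - 1) \<ge> (0::real)"
    by (simp add: less_imp_le)
  ultimately have "exp 1 / (exp 1 - 1) * exp (real (nat \<lfloor>ln y\<rfloor>)) \<le> exp 1 / (exp 1 - 1) * y"
    by (rule mult_left_mono)
  with sum_exp_atMost_le show ?thesis
    by (rule order_trans)
qed

lemma harm_le_ln_plus_one:
  assumes "n \<ge> 1"
  shows "harm n \<le> ln (real n) + 1"
  using assms
proof (induction n rule: dec_induct)
  case base
  then show ?case by (simp add: harm_def)
next
  case (step n)
  have "ln (real n / real (Suc n)) \<le> real n / real (Suc n) - 1"
    using step by (intro ln_le_minus_one) auto
  then have "inverse (real (Suc n)) \<le> ln (real (Suc n)) - ln (real n)"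
    using step by (simp add: ln_div field_simps)
  with step show ?case by (simp add: harm_Suc)
qed

definition level_weight :: "(nat \<Rightarrow> real) \<Rightarrow> (nat \<times> nat \<times> nat) set \<Rightarrow> real" where
  "level_weight w T = (\<Sum>(h, i, u)\<in>T. w u)"

lemma open_cell_nat_level:
  "open_cell K T h i (int j) = T \<union> (\<lambda>(l, u). (h + 1, K * i + l, u)) ` ({..<K} \<times> {..j})"
  unfolding open_cell_def by auto

lemma finite_open_cell:
  "finite T \<Longrightarrow> finite (open_cell K T h i (int j))"
  by (simp add: open_cell_nat_level)

lemma level_weight_open_cell_le:
  assumes "\<And>u. w u \<ge> 0" and "finite T"
  shows "level_weight w (open_cell K T h i (int j)) \<le> level_weight w T + real K * (\<Sum>u\<le>j. w u)"
proof -
  let ?new = "(\<lambda>(l, u). (h + 1, K * i + l, u)) ` ({..<K} \<times> {..j})"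
  have "level_weight w (T \<union> ?new) \<le> level_weight w T + level_weight w ?new"
    unfolding level_weight_def using assms by (simp add: sum_Un case_prod_beta sum_nonneg)
  moreover have "level_weight w ?new \<le> (\<Sum>p\<in>{..<K} \<times> {..j}. w (snd p))"
    unfolding level_weight_def using assms
    by (intro order_trans[OF sum_image_le]) (auto simp: case_prod_beta)
  moreover have "(\<Sum>p\<in>{..<K} \<times> {..j}. w (snd p)) = real K * (\<Sum>u\<le>j. w u)"
    by (simp add: sum.cartesian_product')
  ultimately show ?thesis
    by (simp add: open_cell_nat_level)
qed

lemma kometo_explore_level_weight_le:
  assumes "kometo_explore K f z x s sched s'" and "finite (fst s)" and "\<And>u. w u \<ge> 0"
  shows "finite (fst s') \<and>
    level_weight w (fst s') \<le> level_weight w (fst s) + real K * (\<Sum>(h, j)\<leftarrow>sched. \<Sum>u\<le>j. w u)"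
  using assms(1,2)
proof (induction rule: kometo_explore.induct)
  case (k_skip h Opd j T rest s')
  have "0 \<le> real K * (\<Sum>u\<le>j. w u)"
    using assms(3) by (simp add: sum_nonneg)
  with k_skip show ?case by (auto simp: distrib_left)
next
  case (k_open h i Opd j T rest s')
  have "finite (open_cell K T h i (int j))"
    using k_open.prems by (simp add: finite_open_cell)
  moreover have "level_weight w (open_cell K T h i (int j))
      \<le> level_weight w T + real K * (\<Sum>u\<le>j. w u)"
    using k_open.prems assms(3) by (simp add: level_weight_open_cell_le)
  ultimately show ?case
    using k_open.IH by (auto simp: distrib_left)
qed simp

lemma sum_list_kometo_schedule:
  fixes g :: "nat \<Rightarrow> 'a::comm_monoid_add"
  shows "(\<Sum>(h, j)\<leftarrow>kometo_schedule L. g j) =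
    (\<Sum>h=1..L. \<Sum>m=1..L div h. g (nat \<lfloor>ln (real L / real (h * m))\<rfloor>))"
proof -
  have sum_list_concat: "sum_list (map F (concat xss)) = (\<Sum>xs\<leftarrow>xss. sum_list (map F xs))"
    for F :: "nat \<times> nat \<Rightarrow> 'a" and xss
    by (induction xss) auto
  have sum_list_upt: "sum_list (map F [1..<n + 1]) = (\<Sum>k=1..n. F k)" for F :: "nat \<Rightarrow> 'a" and n
    by (metis sum_set_upt_conv_sum_list_nat set_upt atLeastLessThanSuc_atLeastAtMost Suc_eq_plus1)
  show ?thesis
    unfolding kometo_schedule_def sum_list_concat map_map o_def prod.case sum_list_upt ..
qed

lemma kometo_schedule_level_sum_le:
  "(\<Sum>(h, j)\<leftarrow>kometo_schedule L. \<Sum>u\<le>j. exp (real u))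
     \<le> exp 1 / (exp 1 - 1) * real L * (ln (real L) + 1)\<^sup>2"
proof (cases "L = 0")
  case True
  then show ?thesis by (simp add: kometo_schedule_def)
next
  case False
  define c :: real where "c = exp 1 / (exp 1 - 1)"
  have "c \<ge> 0" unfolding c_def by (simp add: less_imp_le)
  have term_le: "(\<Sum>u\<le>nat \<lfloor>ln (real L / real (h * m))\<rfloor>. exp (real u))
      \<le> c * real L * (inverse (real h) * inverse (real m))"
    if "h \<in> {1..L}" and "m \<in> {1..L div h}" for h m
  proof -
    have "h * m \<le> L"
      using that by (metis atLeastAtMost_iff div_times_less_eq_dividend mult.commute mult_le_mono2 order_trans)
    then have "real L / real (h * m) \<ge> 1"
      using that by (simp add: field_simps del: of_nat_mult)
    from sum_exp_atMost_floor_ln_le[OF this] show ?thesis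
      by (simp add: c_def field_simps)
  qed
  have "(\<Sum>(h, j)\<leftarrow>kometo_schedule L. \<Sum>u\<le>j. exp (real u))
      \<le> (\<Sum>h=1..L. \<Sum>m=1..L div h. c * real L * (inverse (real h) * inverse (real m)))"
    unfolding sum_list_kometo_schedule by (intro sum_mono term_le)
  also have "\<dots> = c * real L * (\<Sum>h=1..L. inverse (real h) * harm (L div h))"
    by (simp add: harm_def sum_distrib_left)
  also have "\<dots> \<le> c * real L * (\<Sum>h=1..L. inverse (real h) * harm L)"
    using \<open>c \<ge> 0\<close> by (intro mult_left_mono sum_mono harm_mono) auto
  also have "\<dots> = c * real L * harm L * harm L"
    by (simp add: harm_def sum_distrib_right)
  also have "\<dots> \<le> c * real L * (ln (real L) + 1)\<^sup>2"
    using \<open>c \<ge> 0\<close> False harm_le_ln_plus_one[of L] harm_nonneg[where 'a=real]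
    by (simp add: power2_eq_square mult.assoc mult_left_mono mult_mono)
  finally show ?thesis unfolding c_def .
qed

lemma kometo_run_level_weight_le:
  assumes "kometo_explore K f z x (open_cell K {} 0 0 (kometo_jmax L), {(0, 0)}) (kometo_schedule L) (T, Opd)"
  shows "finite T \<and> level_weight (\<lambda>u. exp (real u)) T
    \<le> real K * (exp 1 / (exp 1 - 1)) * real L * (1 + (ln (real L) + 1)\<^sup>2)"
proof (cases "L = 0")
  case True
  have "open_cell K {} 0 0 (kometo_jmax L) = {}"
    using True by (simp add: kometo_jmax_def open_cell_def)
  with True show ?thesis
    using kometo_explore_level_weight_le[OF assms, of "\<lambda>u. exp (real u)"]
    by (simp add: kometo_schedule_def level_weight_def)
next
  case False
  define c :: real where "c = exp 1 / (exp 1 - 1)"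
  define j0 where "j0 = nat \<lfloor>ln (real L)\<rfloor>"
  define T0 where "T0 = open_cell K {} 0 0 (kometo_jmax L)"
  have "T0 = open_cell K {} 0 0 (int j0)"
    unfolding T0_def using False by (simp add: kometo_jmax_def j0_def)
  then have "finite T0"
    by (simp add: finite_open_cell)
  have "level_weight (\<lambda>u. exp (real u)) T0
      \<le> level_weight (\<lambda>u. exp (real u)) {} + real K * (\<Sum>u\<le>j0. exp (real u))"
    unfolding \<open>T0 = open_cell K {} 0 0 (int j0)\<close> by (rule level_weight_open_cell_le) simp_all
  also have "\<dots> \<le> real K * (c * real L)"
  proof -
    have "(\<Sum>u\<le>j0. exp (real u)) \<le> c * real L"
      unfolding j0_def c_def using False by (intro sum_exp_atMost_floor_ln_le) simp
    then show ?thesis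
      by (simp add: level_weight_def mult_left_mono)
  qed
  finally have root_le: "level_weight (\<lambda>u. exp (real u)) T0 \<le> real K * (c * real L)" .
  have schedule_le: "real K * (\<Sum>(h, j)\<leftarrow>kometo_schedule L. \<Sum>u\<le>j. exp (real u))
      \<le> real K * (c * real L * (ln (real L) + 1)\<^sup>2)"
    unfolding c_def by (intro mult_left_mono kometo_schedule_level_sum_le) simp
  note explore = kometo_explore_level_weight_le[OF assms[folded T0_def] _, of "\<lambda>u. exp (real u)"]
  from explore \<open>finite T0\<close> have "finite T"
    by simp
  from explore \<open>finite T0\<close> have "level_weight (\<lambda>u. exp (real u)) T
      \<le> level_weight (\<lambda>u. exp (real u)) T0
        + real K * (\<Sum>(h, j)\<leftarrow>kometo_schedule L. \<Sum>u\<le>j. exp (real u))"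
    by simp
  also have "\<dots> \<le> real K * (c * real L) + real K * (c * real L * (ln (real L) + 1)\<^sup>2)"
    using root_le schedule_le by (rule add_mono)
  also have "\<dots> = real K * c * real L * (1 + (ln (real L) + 1)\<^sup>2)"
    by (simp add: algebra_simps)
  finally show ?thesis
    using \<open>finite T\<close> unfolding c_def by simp
qed

lemma kometo_cost_le:
  assumes "\<And>c. c \<ge> 1 \<Longrightarrow> lam (z c) \<le> ennreal c" and "finite T"
  shows "kometo_cost lam z L T
    \<le> ennreal (level_weight (\<lambda>u. exp (real u)) T + real (nat (kometo_jmax L + 1)) * real L)"
proof -
  define n where "n = nat (kometo_jmax L + 1)"
  have "(\<Sum>(h, i, u)\<in>T. lam (z (exp (real u)))) \<le> (\<Sum>(h, i, u)\<in>T. ennreal (exp (real u)))"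
    using assms(1) by (intro sum_mono) (auto simp: case_prod_beta)
  also have "\<dots> = ennreal (level_weight (\<lambda>u. exp (real u)) T)"
    unfolding level_weight_def case_prod_beta by (rule sum_ennreal) simp
  finally have evaluations: "(\<Sum>(h, i, u)\<in>T. lam (z (exp (real u))))
      \<le> ennreal (level_weight (\<lambda>u. exp (real u)) T)" .
  have cross_validation: "of_nat n * lam (z (real L)) \<le> ennreal (real n * real L)"
  proof (cases "L = 0")
    case True
    then show ?thesis by (simp add: n_def kometo_jmax_def)
  next
    case False
    then have "of_nat n * lam (z (real L)) \<le> of_nat n * ennreal (real L)"
      using assms(1)[of "real L"] by (intro mult_left_mono) auto
    then show ?thesis
      by (simp add: ennreal_of_nat_eq_real_of_nat ennreal_mult)
  qed
  have "level_weight (\<lambda>u. exp (real u)) T \<ge> 0"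
    unfolding level_weight_def by (simp add: sum_nonneg case_prod_beta)
  with add_mono[OF evaluations cross_validation] show ?thesis
    unfolding kometo_cost_def n_def by (simp add: ennreal_plus)
qed

lemma kometo_Lt_le:
  assumes "K \<ge> 1" and "Lam \<ge> 1"
  shows "real (kometo_Lt K Lam) * (2 * real K * (exp 1 / (exp 1 - 1)) * (ln Lam + 1)\<^sup>2) \<le> Lam"
proof -
  define D where "D = 2 * real K * (exp 1 / (exp 1 - 1)) * (ln Lam + 1)\<^sup>2"
  have "ln Lam + 1 > 0"
    using ln_ge_zero[OF assms(2)] by linarith
  then have "D > 0"
    unfolding D_def using assms by simp
  have "(exp 1 - 1) * Lam / (2 * real K * exp 1 * (ln Lam + 1)\<^sup>2) = Lam / D"
    unfolding D_def by (simp add: field_simps)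
  then have "real (kometo_Lt K Lam) = of_int \<lfloor>Lam / D\<rfloor>"
    unfolding kometo_Lt_def using \<open>D > 0\<close> assms by simp
  also have "\<dots> \<le> Lam / D"
    by simp
  finally have "real (kometo_Lt K Lam) * D \<le> Lam"
    using \<open>D > 0\<close> by (simp add: pos_le_divide_eq)
  then show ?thesis
    unfolding D_def .
qed

lemma budget_split_arith:
  fixes K c L Lam a b n :: real
  assumes "K \<ge> 2" "c \<ge> 1" "L \<ge> 0" "a \<ge> 2" "0 \<le> b" "b \<le> a" "n \<le> a"
    and "L * (2 * K * c * a\<^sup>2) \<le> Lam"
  shows "K * c * L * (1 + b\<^sup>2) + n * L \<le> Lam"
proof -
  define Q where "Q = K * c * L"
  have "2 * L \<le> Q"
    unfolding Q_def using assms mult_mono[of 2 K 1 c] by (simp add: mult_right_mono)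
  have "2 * a \<le> a * a"
    using assms mult_right_mono[of 2 a a] by simp
  then have "1 + a / 2 \<le> a\<^sup>2"
    using assms unfolding power2_eq_square by linarith
  have "Q * (1 + b\<^sup>2) + n * L \<le> Q * (1 + a\<^sup>2) + a * L"
    using assms \<open>2 * L \<le> Q\<close> by (intro add_mono mult_left_mono mult_right_mono power_mono) auto
  also have "\<dots> \<le> Q * (1 + a\<^sup>2 + a / 2)"
    using assms \<open>2 * L \<le> Q\<close> by (simp add: algebra_simps mult_left_mono)
  also have "\<dots> \<le> Q * (2 * a\<^sup>2)"
    using assms \<open>2 * L \<le> Q\<close> \<open>1 + a / 2 \<le> a\<^sup>2\<close> by (intro mult_left_mono) auto
  also have "\<dots> \<le> Lam"
    using assms unfolding Q_def by (simp add: mult_ac)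
  finally show ?thesis unfolding Q_def .
qed

lemma kometo_budget_le:
  assumes "K \<ge> 2" and "Lam \<ge> 1"
  defines "L \<equiv> kometo_Lt K Lam"
  shows "real K * (exp 1 / (exp 1 - 1)) * real L * (1 + (ln (real L) + 1)\<^sup>2)
    + real (nat (kometo_jmax L + 1)) * real L \<le> Lam"
proof (cases "L = 0")
  case True
  then show ?thesis
    using assms by simp
next
  case False
  define c :: real where "c = exp 1 / (exp 1 - 1)"
  define a where "a = ln Lam + 1"
  have "c \<ge> 1"
    unfolding c_def by (simp add: field_simps)
  have "a \<ge> 1"
    unfolding a_def using ln_ge_zero[OF assms(2)] by linarith
  define D where "D = 2 * real K * c * a\<^sup>2"
  have L_le: "real L * D \<le> Lam"
    unfolding L_def D_def c_def a_def using kometo_Lt_le assms by simp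
  have "4 \<le> D"
    unfolding D_def
    using assms(1) \<open>c \<ge> 1\<close> \<open>a \<ge> 1\<close> mult_mono[of 4 "2 * real K" 1 "c * a\<^sup>2"] one_le_power[of a 2]
      mult_mono[of 1 c 1 "a\<^sup>2"]
    by (simp add: mult.assoc)
  then have "real L * 4 \<le> Lam"
    using L_le mult_left_mono[of 4 D "real L"] by simp
  then have "real L \<le> Lam" and "4 \<le> Lam"
    using False by linarith+
  have "exp 1 \<le> Lam"
    using exp_le \<open>4 \<le> Lam\<close> by linarith
  then have "a \<ge> 2"
    unfolding a_def using ln_mono[of "exp 1" Lam] by simp
  have "ln (real L) + 1 \<le> a"
    unfolding a_def using \<open>real L \<le> Lam\<close> False by simp
  have "real (nat (kometo_jmax L + 1)) \<le> ln (real L) + 1"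
    using False by (simp add: kometo_jmax_def)
  with \<open>ln (real L) + 1 \<le> a\<close> have levels_le: "real (nat (kometo_jmax L + 1)) \<le> a"
    by linarith
  have "2 \<le> real K" and "0 \<le> real L" and "0 \<le> ln (real L) + 1"
    using assms(1) False by simp_all
  from budget_split_arith[OF this(1) \<open>c \<ge> 1\<close> this(2) \<open>a \<ge> 2\<close> this(3)
      \<open>ln (real L) + 1 \<le> a\<close> levels_le L_le[unfolded D_def]]
  show ?thesis
    unfolding c_def .
qed

theorem proposition2:
  fixes X :: "'a set" and P :: "nat \<Rightarrow> nat \<Rightarrow> 'a set" and x :: "nat \<Rightarrow> nat \<Rightarrow> 'a"
    and K :: nat and f :: "real \<Rightarrow> 'a \<Rightarrow> real" and lam :: "real \<Rightarrow> ennreal"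
    and z :: "real \<Rightarrow> real" and Lam :: real
    and T :: "(nat \<times> nat \<times> nat) set" and Opd :: "(nat \<times> nat) set"
  assumes K2: "K \<ge> 2"
    and root: "P 0 0 = X"
    and part_union: "\<And>h i. i < K ^ h \<Longrightarrow> (\<Union>l<K. P (h + 1) (K * i + l)) = P h i"
    and part_disj: "\<And>h i l l'. i < K ^ h \<Longrightarrow> l < K \<Longrightarrow> l' < K \<Longrightarrow> l \<noteq> l'
                      \<Longrightarrow> P (h + 1) (K * i + l) \<inter> P (h + 1) (K * i + l') = {}"
    and reps: "\<And>h i. i < K ^ h \<Longrightarrow> x h i \<in> P h i"
    and fid: "\<And>c. c \<ge> 1 \<Longrightarrow> z c \<in> {0..1} \<and> lam (z c) \<le> ennreal c"
    and budget: "Lam \<ge> 1"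
    and run: "kometo_explore K f z x
                (open_cell K {} 0 0 (kometo_jmax (kometo_Lt K Lam)), {(0, 0)})
                (kometo_schedule (kometo_Lt K Lam)) (T, Opd)"
  shows "kometo_cost lam z (kometo_Lt K Lam) T \<le> ennreal Lam"
proof -
  define L where "L = kometo_Lt K Lam"
  have "finite T" and weight_le: "level_weight (\<lambda>u. exp (real u)) T
      \<le> real K * (exp 1 / (exp 1 - 1)) * real L * (1 + (ln (real L) + 1)\<^sup>2)"
    using kometo_run_level_weight_le[OF run[folded L_def]] by auto
  have "kometo_cost lam z L T
      \<le> ennreal (level_weight (\<lambda>u. exp (real u)) T + real (nat (kometo_jmax L + 1)) * real L)"
    using kometo_cost_le[OF _ \<open>finite T\<close>] fid by blast
  also have "\<dots> \<le> ennreal Lam"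
    using weight_le kometo_budget_le[OF K2 budget] unfolding L_def
    by (intro ennreal_leI) linarith
  finally show ?thesis
    unfolding L_def .
qed

end
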